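(* Let $\phi$ be an escort and let $V$ be a $C^1$ function on an open neighbourhood of the interior $\Delta^n_\circ=\{x\in\mathbb{R}^n: x_i>0,\ \sum_ix_i=1\}$ of the simplex, with Euclidean gradient $f=\nabla V$. Let $x(t)$ be a solution in $\Delta^n_\circ$ of the escort replicator equation \[\dot x_i=\phi(x_i)\left(f_i(x)-\mathbb{E}^{\phi}_{x}[f(x)]\right),\qquad i=1,\dots,n.\] Then along the solution \[\frac{d}{dt}V(x)=Z_\phi(x)\,\mathrm{Var}^{\phi}_{x}[f(x)].\]
   Context: An escort is a continuous function $\phi$ that is strictly positive on $(0,1]$. For $x=(x_1,\dots,x_n)$: the partition function is $Z_\phi(x)=\sum_{i=1}^n\phi(x_i)$; for a vector $g\in\mathbb{R}^n$ the escort expectation is $\mathbb{E}^{\phi}_{x}[g]=\frac{1}{Z_\phi(x)}\sum_{i=1}^n\phi(x_i)g_i$; and the escort variance is $\mathrm{Var}^{\phi}_{x}[g]=\mathbb{E}^{\phi}_{x}\big[(g-\mathbb{E}^{\phi}_{x}[g])^2\big]=\frac{1}{Z_\phi(x)}\sum_{i}\phi(x_i)\big(g_i-\mathbb{E}^{\phi}_{x}[g]\big)^2$. *)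

theory Defs
  imports "HOL-Analysis.Analysis"
begin

definition escort :: "(real \<Rightarrow> real) \<Rightarrow> bool" where
  "escort \<phi> \<longleftrightarrow> continuous_on {0..1} \<phi> \<and> (\<forall>u\<in>{0<..1}. \<phi> u > 0)"

definition open_simplex :: "(real ^ 'n) set" where
  "open_simplex = {x. (\<forall>i. x $ i > 0) \<and> (\<Sum>i\<in>UNIV. x $ i) = 1}"

definition partition_fn :: "(real \<Rightarrow> real) \<Rightarrow> real ^ 'n \<Rightarrow> real" where
  "partition_fn \<phi> x = (\<Sum>i\<in>UNIV. \<phi> (x $ i))"

definition escort_exp :: "(real \<Rightarrow> real) \<Rightarrow> real ^ 'n \<Rightarrow> real ^ 'n \<Rightarrow> real" where
  "escort_exp \<phi> x g = (\<Sum>i\<in>UNIV. \<phi> (x $ i) * g $ i) / partition_fn \<phi> x"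

definition escort_var :: "(real \<Rightarrow> real) \<Rightarrow> real ^ 'n \<Rightarrow> real ^ 'n \<Rightarrow> real" where
  "escort_var \<phi> x g =
     (\<Sum>i\<in>UNIV. \<phi> (x $ i) * (g $ i - escort_exp \<phi> x g)\<^sup>2) / partition_fn \<phi> x"

end

theory Submission
  imports Defs
begin

text \<open>By the chain rule, the derivative of \<open>V(x(t))\<close> is \<open>\<langle>f(x), \<dot>x\<rangle> = \<Sum>\<^sub>i \<phi>(x\<^sub>i) f\<^sub>i (f\<^sub>i - E[f])\<close>.
  Since the escort weights \<open>\<phi>(x\<^sub>i)\<close> of the centred vector \<open>f - E[f]\<close> sum to zero, one may
  replace \<open>f\<^sub>i\<close> by \<open>f\<^sub>i - E[f]\<close>, which gives \<open>Z \<cdot> Var[f]\<close>.\<close>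

lemma open_simplex_component_bounds:
  assumes "x \<in> open_simplex"
  shows "0 < x $ i" "x $ i \<le> 1"
proof -
  have pos: "\<And>j. 0 < x $ j" using assms by (simp add: open_simplex_def)
  then show "0 < x $ i" .
  have "x $ i = (\<Sum>j\<in>{i}. x $ j)" by simp
  also have "\<dots> \<le> (\<Sum>j\<in>UNIV. x $ j)"
    by (rule sum_mono2) (auto intro: less_imp_le pos)
  also have "\<dots> = 1" using assms by (simp add: open_simplex_def)
  finally show "x $ i \<le> 1" .
qed

lemma escort_pos_on_open_simplex:
  assumes "escort \<phi>" and "x \<in> open_simplex"
  shows "0 < \<phi> (x $ i)"
  using assms open_simplex_component_bounds[OF assms(2)] by (simp add: escort_def)

lemma partition_fn_pos:
  assumes "escort \<phi>" and "x \<in> open_simplex"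
  shows "0 < partition_fn \<phi> x"
  unfolding partition_fn_def
  by (rule sum_pos) (auto intro: escort_pos_on_open_simplex[OF assms])

lemma escort_weighted_deviation_sum_zero:
  assumes "partition_fn \<phi> x \<noteq> 0"
  shows "(\<Sum>i\<in>UNIV. \<phi> (x $ i) * (g $ i - escort_exp \<phi> x g)) = 0"
proof -
  let ?E = "escort_exp \<phi> x g"
  have "(\<Sum>i\<in>UNIV. \<phi> (x $ i) * (g $ i - ?E))
        = (\<Sum>i\<in>UNIV. \<phi> (x $ i) * g $ i) - partition_fn \<phi> x * ?E"
    by (simp add: right_diff_distrib sum_subtractf sum_distrib_right partition_fn_def)
  also have "\<dots> = 0"
    using assms by (simp add: escort_exp_def)
  finally show ?thesis .
qed

lemma inner_escort_replicator_field:
  fixes g :: "real ^ 'n"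
  assumes "partition_fn \<phi> x \<noteq> 0"
  shows "g \<bullet> (\<chi> i. \<phi> (x $ i) * (g $ i - escort_exp \<phi> x g))
         = partition_fn \<phi> x * escort_var \<phi> x g"
proof -
  let ?E = "escort_exp \<phi> x g"
  have "g \<bullet> (\<chi> i. \<phi> (x $ i) * (g $ i - ?E)) = (\<Sum>i\<in>UNIV. g $ i * (\<phi> (x $ i) * (g $ i - ?E)))"
    by (simp add: inner_vec_def)
  also have "\<dots> = (\<Sum>i\<in>UNIV. \<phi> (x $ i) * (g $ i - ?E)\<^sup>2 + ?E * (\<phi> (x $ i) * (g $ i - ?E)))"
    by (rule sum.cong) (auto simp: power2_eq_square algebra_simps)
  also have "\<dots> = (\<Sum>i\<in>UNIV. \<phi> (x $ i) * (g $ i - ?E)\<^sup>2)"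
    using escort_weighted_deviation_sum_zero[OF assms]
    by (simp add: sum.distrib sum_distrib_left[symmetric])
  also have "\<dots> = partition_fn \<phi> x * escort_var \<phi> x g"
    using assms by (simp add: escort_var_def)
  finally show ?thesis .
qed

theorem mainTheorem2:
  fixes \<phi> :: "real \<Rightarrow> real"
    and V :: "real ^ 'n \<Rightarrow> real"
    and f :: "real ^ 'n \<Rightarrow> real ^ 'n"
    and U :: "(real ^ 'n) set"
    and x :: "real \<Rightarrow> real ^ 'n"
    and T :: "real set"
  assumes esc: "escort \<phi>"
    and U_open: "open U"
    and U_nbhd: "open_simplex \<subseteq> U"
    and grad: "\<And>y. y \<in> U \<Longrightarrow> (V has_derivative (\<lambda>h. f y \<bullet> h)) (at y)"
    and C1: "continuous_on U f"
    and T_open: "open T"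
    and T_int: "is_interval T"
    and sol_in: "\<And>t. t \<in> T \<Longrightarrow> x t \<in> open_simplex"
    and sol_ode: "\<And>t. t \<in> T \<Longrightarrow>
        (x has_vector_derivative
           (\<chi> i. \<phi> (x t $ i) * (f (x t) $ i - escort_exp \<phi> (x t) (f (x t))))) (at t)"
    and t_in: "t \<in> T"
  shows "((\<lambda>s. V (x s)) has_real_derivative
            partition_fn \<phi> (x t) * escort_var \<phi> (x t) (f (x t))) (at t)"
proof -
  define v where "v = (\<chi> i. \<phi> (x t $ i) * (f (x t) $ i - escort_exp \<phi> (x t) (f (x t))))"
  have xt: "x t \<in> open_simplex" using sol_in t_in .
  have dV: "(V has_derivative (\<lambda>h. f (x t) \<bullet> h)) (at (x t))"
    using grad U_nbhd xt by blast
  have dx: "(x has_derivative (\<lambda>h. h *\<^sub>R v)) (at t)"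
    using sol_ode[OF t_in] unfolding has_vector_derivative_def v_def .
  have "((\<lambda>s. V (x s)) has_derivative (\<lambda>h. (f (x t) \<bullet> v) * h)) (at t)"
    using diff_chain_at[OF dx dV] by (simp add: o_def mult.commute)
  moreover have "f (x t) \<bullet> v = partition_fn \<phi> (x t) * escort_var \<phi> (x t) (f (x t))"
    unfolding v_def
    by (rule inner_escort_replicator_field) (use partition_fn_pos[OF esc xt] in simp)
  ultimately show ?thesis
    unfolding has_field_derivative_def by simp
qed

end
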